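(* Under the setting of the MERL algorithm with true environment $\mu\in\mathcal M$, with $P_{\mu,\pi}$-probability at least $1-\delta/4$ we have $\mu\in\mathcal M_t$ for all time steps $t$.
   Context: Setting. $A$, $O$ are finite sets of actions and observations and $R\subset[0,1]$ a finite set of rewards. A history is a finite sequence of action/observation/reward triples; $\ell(h)$ is its length. An environment $\nu$ is a family of conditional distributions over the next (observation, reward) pair given the history and action. A policy maps finite histories to actions; policy and environment $\nu$ induce a measure $P_{\nu,\pi}$ on infinite histories. Fix $\gamma\in(0,1)$. For a history $h$ of length $t$, $V^\pi_\nu(h;d'):=\mathbf E_{\nu,\pi}[\sum_{k=0}^{d'-1}\gamma^kr_{t+1+k}\mid h]$, $V^\pi_\nu(h):=\lim_{d'\to\infty}V^\pi_\nu(h;d')$; $\pi^*_\nu$ is a fixed optimal policy for $\nu$ and $V^*_\nu:=V^{\pi^*_\nu}_\nu$. Logarithms are natural. $\mathcal M=\{\nu_1,\dots,\nu_N\}$, $\epsilon\in(0,1]$, $\delta\in(0,1)$. Constants. $d:=\lceil\frac1{1-\gamma}\log\frac{8}{(1-\gamma)\epsilon}\rceil$; $\mathcal K:=\{0,1,\dots,\lceil\log_2\frac1{\epsilon(1-\gamma)}\rceil+2\}$; $\delta_1:=\frac{\delta}{32|\mathcal K|N^{3/2}}$; $\alpha:=\frac{4\sqrt N}{4\sqrt N-1}$, $\alpha_j:=\lceil\alpha^j\rceil$. MERL algorithm. It maintains $\mathcal M_t\subseteq\mathcal M$ (initially $\mathcal M$), counters $E(\nu,\kappa)$ (initially 0)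 and statistics $X(\nu,\kappa)_i$. At each time $t$ not inside an ongoing exploration phase, with history $h$: with $\Pi:=\{\pi^*_\nu:\nu\in\mathcal M_t\}$, choose $\overline\nu,\underline\nu\in\mathcal M_t$, $\pi'\in\Pi$ maximizing $V^{\pi'}_{\overline\nu}(h;d)-V^{\pi'}_{\underline\nu}(h;d)=: \Delta$. If $\Delta>\epsilon/4$, an exploration phase starts: follow $\pi'$ for $d$ steps, with return $R=\sum_{j=0}^{d-1}\gamma^jr_{t+1+j}$; with $\kappa:=\min\{\kappa\in\mathbb N:\Delta>\epsilon2^{\kappa-2}\}$ increment $E(\overline\nu,\kappa),E(\underline\nu,\kappa)$ and record $X(\overline\nu,\kappa)_{E(\overline\nu,\kappa)}:=(1-\gamma)(V^{\pi'}_{\overline\nu}(h;d)-R)$, $X(\underline\nu,\kappa)_{E(\underline\nu,\kappa)}:=(1-\gamma)(R-V^{\pi'}_{\underline\nu}(h;d))$. Otherwise take one action $\pi^*_{\nu_i}(h)$ with $i$ minimal such that $\nu_i\in\mathcal M_t$. Whenever some $\nu\in\mathcal M_t$, $\kappa$, $j\in\mathbb N$ satisfy $E(\nu,\kappa)=\alpha_j$ and $\sum_{i=1}^{E(\nu,\kappa)}X(\nu,\kappa)_i\ge\sqrt{2E(\nu,\kappa)\log(E(\nu,\kappa)/\delta_1)}$, $\nu$ is removed. $\pi$ denotes MERL's policy and probabilities are w.r.t. $P_{\mu,\pi}$. *)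

theory Defs
  imports "HOL-Probability.Probability"
begin

text \<open>The finite reward
set R is the range of an (injective) map rew :: 'r => real with values in [0,1].\<close>

type_synonym ('a,'o,'r) hist = "('a \<times> 'o \<times> 'r) list"
type_synonym ('a,'o,'r) env = "('a,'o,'r) hist \<Rightarrow> 'a \<Rightarrow> ('o \<times> 'r) pmf"
type_synonym ('a,'o,'r) policy = "('a,'o,'r) hist \<Rightarrow> 'a"

fun hist_ext :: "('a,'o,'r) env \<Rightarrow> ('a,'o,'r) policy \<Rightarrow> ('a,'o,'r) hist \<Rightarrow> nat
    \<Rightarrow> ('a,'o,'r) hist pmf" where
  "hist_ext \<nu> \<pi> h 0 = return_pmf h"
| "hist_ext \<nu> \<pi> h (Suc n) =
     bind_pmf (hist_ext \<nu> \<pi> h n)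
       (\<lambda>h'. map_pmf (\<lambda>(ob, r). h' @ [(\<pi> h', ob, r)]) (\<nu> h' (\<pi> h')))"

text \<open>Reward of the i-th triple (0-indexed) of a history, i.e. r_{i+1}.\<close>
definition rew_at :: "('r \<Rightarrow> real) \<Rightarrow> ('a,'o,'r) hist \<Rightarrow> nat \<Rightarrow> real" where
  "rew_at rew h i = rew (snd (snd (h ! i)))"

definition Vfin :: "('r \<Rightarrow> real) \<Rightarrow> real \<Rightarrow> ('a,'o,'r) env \<Rightarrow> ('a,'o,'r) policy
    \<Rightarrow> ('a,'o,'r) hist \<Rightarrow> nat \<Rightarrow> real" where
  "Vfin rew \<gamma> \<nu> \<pi> h n =
     measure_pmf.expectation (hist_ext \<nu> \<pi> h n)
       (\<lambda>h'. \<Sum>k<n. \<gamma> ^ k * rew_at rew h' (length h + k))"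

definition Vinf :: "('r \<Rightarrow> real) \<Rightarrow> real \<Rightarrow> ('a,'o,'r) env \<Rightarrow> ('a,'o,'r) policy
    \<Rightarrow> ('a,'o,'r) hist \<Rightarrow> real" where
  "Vinf rew \<gamma> \<nu> \<pi> h = lim (\<lambda>n. Vfin rew \<gamma> \<nu> \<pi> h n)"

definition optimal_policy :: "('r \<Rightarrow> real) \<Rightarrow> real \<Rightarrow> ('a,'o,'r) env \<Rightarrow> ('a,'o,'r) policy \<Rightarrow> bool" where
  "optimal_policy rew \<gamma> \<nu> \<pi> \<longleftrightarrow> (\<forall>\<pi>' h. Vinf rew \<gamma> \<nu> \<pi>' h \<le> Vinf rew \<gamma> \<nu> \<pi> h)"

definition merl_d :: "real \<Rightarrow> real \<Rightarrow> nat" where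
  "merl_d \<gamma> \<epsilon> = nat \<lceil>(1 / (1 - \<gamma>)) * ln (8 / ((1 - \<gamma>) * \<epsilon>))\<rceil>"

definition merl_K :: "real \<Rightarrow> real \<Rightarrow> nat set" where
  "merl_K \<gamma> \<epsilon> = {0 .. nat \<lceil>log 2 (1 / (\<epsilon> * (1 - \<gamma>)))\<rceil> + 2}"

definition merl_delta1 :: "real \<Rightarrow> real \<Rightarrow> real \<Rightarrow> nat \<Rightarrow> real" where
  "merl_delta1 \<gamma> \<epsilon> \<delta> N = \<delta> / (32 * real (card (merl_K \<gamma> \<epsilon>)) * real N powr (3/2))"

definition merl_alpha :: "nat \<Rightarrow> real" where
  "merl_alpha N = 4 * sqrt (real N) / (4 * sqrt (real N) - 1)"

definition merl_alpha_j :: "nat \<Rightarrow> nat \<Rightarrow> nat" where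
  "merl_alpha_j N j = nat \<lceil>merl_alpha N ^ j\<rceil>"

text \<open>The model class is M = {env i | i < N}; environments and their fixed optimal
policies are referred to by index.  An ongoing exploration phase stores: upper index,
lower index, index of the followed optimal policy pi', kappa, V^{pi'}_{upper}(h;d),
V^{pi'}_{lower}(h;d) (h = history at the start of the phase), the number of steps
already taken and the discounted return accumulated so far.\<close>

datatype phase = Phase nat nat nat nat real real nat real

definition phase_pol :: "phase \<Rightarrow> nat" where
  "phase_pol ph = (case ph of Phase u l p \<kappa> vu vl k R \<Rightarrow> p)"

record merl_state =
  Ms :: "nat set"                       \<comment> \<open>M_t (as a set of indices)\<close>
  Xs :: "nat \<Rightarrow> nat \<Rightarrow> real list"     \<comment> \<open>X(nu,kappa)_1..X(nu,kappa)_E, E(nu,kappa) = length\<close>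
  phase :: "phase option"

definition merl_init :: "nat \<Rightarrow> merl_state" where
  "merl_init N = \<lparr>Ms = {..<N}, Xs = (\<lambda>_ _. []), phase = None\<rparr>"

definition merl_Delta :: "('r \<Rightarrow> real) \<Rightarrow> real \<Rightarrow> real \<Rightarrow> (nat \<Rightarrow> ('a,'o,'r) env)
    \<Rightarrow> (nat \<Rightarrow> ('a,'o,'r) policy) \<Rightarrow> ('a,'o,'r) hist \<Rightarrow> nat \<times> nat \<times> nat \<Rightarrow> real" where
  "merl_Delta rew \<gamma> \<epsilon> env opt h x = (case x of (u, l, p) \<Rightarrow>
     Vfin rew \<gamma> (env u) (opt p) h (merl_d \<gamma> \<epsilon>) - Vfin rew \<gamma> (env l) (opt p) h (merl_d \<gamma> \<epsilon>))"

definition valid_tiebreak :: "('r \<Rightarrow> real) \<Rightarrow> real \<Rightarrow> real \<Rightarrow> nat \<Rightarrow> (nat \<Rightarrow> ('a,'o,'r) env)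
    \<Rightarrow> (nat \<Rightarrow> ('a,'o,'r) policy) \<Rightarrow> (('a,'o,'r) hist \<Rightarrow> nat set \<Rightarrow> nat \<times> nat \<times> nat) \<Rightarrow> bool" where
  "valid_tiebreak rew \<gamma> \<epsilon> N env opt tb \<longleftrightarrow>
     (\<forall>h M. M \<noteq> {} \<longrightarrow> M \<subseteq> {..<N} \<longrightarrow>
        tb h M \<in> M \<times> M \<times> M \<and>
        (\<forall>y \<in> M \<times> M \<times> M. merl_Delta rew \<gamma> \<epsilon> env opt h y \<le> merl_Delta rew \<gamma> \<epsilon> env opt h (tb h M)))"

definition merl_decide :: "('r \<Rightarrow> real) \<Rightarrow> real \<Rightarrow> real \<Rightarrow> (nat \<Rightarrow> ('a,'o,'r) env)
    \<Rightarrow> (nat \<Rightarrow> ('a,'o,'r) policy) \<Rightarrow> (('a,'o,'r) hist \<Rightarrow> nat set \<Rightarrow> nat \<times> nat \<times> nat)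
    \<Rightarrow> nat set \<Rightarrow> ('a,'o,'r) hist \<Rightarrow> (nat \<times> nat \<times> nat) option" where
  "merl_decide rew \<gamma> \<epsilon> env opt tb M h =
     (if M = {} then None
      else if merl_Delta rew \<gamma> \<epsilon> env opt h (tb h M) > \<epsilon> / 4 then Some (tb h M) else None)"

definition merl_kappa :: "real \<Rightarrow> real \<Rightarrow> nat" where
  "merl_kappa \<epsilon> \<Delta> = (LEAST \<kappa>::nat. \<Delta> > \<epsilon> * 2 powr (real \<kappa> - 2))"

definition removal_cond :: "real \<Rightarrow> real \<Rightarrow> real \<Rightarrow> nat \<Rightarrow> real list \<Rightarrow> bool" where
  "removal_cond \<gamma> \<epsilon> \<delta> N xs \<longleftrightarrow>
     (\<exists>j. length xs = merl_alpha_j N j) \<and>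
     sum_list xs \<ge> sqrt (2 * real (length xs) * ln (real (length xs) / merl_delta1 \<gamma> \<epsilon> \<delta> N))"

definition merl_finalize :: "real \<Rightarrow> real \<Rightarrow> real \<Rightarrow> nat \<Rightarrow> merl_state
    \<Rightarrow> nat \<Rightarrow> nat \<Rightarrow> nat \<Rightarrow> real \<Rightarrow> real \<Rightarrow> real \<Rightarrow> merl_state" where
  "merl_finalize \<gamma> \<epsilon> \<delta> N s u l \<kappa> vu vl R =
     (let X1 = (Xs s)(u := (Xs s u)(\<kappa> := Xs s u \<kappa> @ [(1 - \<gamma>) * (vu - R)]));
          X2 = X1(l := (X1 l)(\<kappa> := X1 l \<kappa> @ [(1 - \<gamma>) * (R - vl)]))
      in \<lparr>Ms = {\<nu> \<in> Ms s. \<not> (\<exists>\<kappa>'. removal_cond \<gamma> \<epsilon> \<delta> N (X2 \<nu> \<kappa>'))},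
          Xs = X2, phase = None\<rparr>)"

definition merl_advance :: "('r \<Rightarrow> real) \<Rightarrow> real \<Rightarrow> real \<Rightarrow> real \<Rightarrow> nat \<Rightarrow> merl_state
    \<Rightarrow> phase \<Rightarrow> 'r \<Rightarrow> merl_state" where
  "merl_advance rew \<gamma> \<epsilon> \<delta> N s ph r = (case ph of Phase u l p \<kappa> vu vl k R \<Rightarrow>
     (let R' = R + \<gamma> ^ k * rew r in
      if Suc k \<ge> merl_d \<gamma> \<epsilon> then merl_finalize \<gamma> \<epsilon> \<delta> N s u l \<kappa> vu vl R'
      else s\<lparr>phase := Some (Phase u l p \<kappa> vu vl (Suc k) R')\<rparr>))"

definition merl_step :: "('r \<Rightarrow> real) \<Rightarrow> real \<Rightarrow> real \<Rightarrow> real \<Rightarrow> nat \<Rightarrow> (nat \<Rightarrow> ('a,'o,'r) env)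
    \<Rightarrow> (nat \<Rightarrow> ('a,'o,'r) policy) \<Rightarrow> (('a,'o,'r) hist \<Rightarrow> nat set \<Rightarrow> nat \<times> nat \<times> nat)
    \<Rightarrow> merl_state \<Rightarrow> ('a,'o,'r) hist \<Rightarrow> 'a \<times> 'o \<times> 'r \<Rightarrow> merl_state" where
  "merl_step rew \<gamma> \<epsilon> \<delta> N env opt tb s h x =
     (case phase s of
        Some ph \<Rightarrow> merl_advance rew \<gamma> \<epsilon> \<delta> N s ph (snd (snd x))
      | None \<Rightarrow>
          (case merl_decide rew \<gamma> \<epsilon> env opt tb (Ms s) h of
             None \<Rightarrow> s
           | Some (u, l, p) \<Rightarrow>
               (let \<Delta> = merl_Delta rew \<gamma> \<epsilon> env opt h (u, l, p);
                    vu = Vfin rew \<gamma> (env u) (opt p) h (merl_d \<gamma> \<epsilon>);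
                    vl = Vfin rew \<gamma> (env l) (opt p) h (merl_d \<gamma> \<epsilon>)
                in merl_advance rew \<gamma> \<epsilon> \<delta> N s
                     (Phase u l p (merl_kappa \<epsilon> \<Delta>) vu vl 0 0) (snd (snd x)))))"

definition merl_run :: "('r \<Rightarrow> real) \<Rightarrow> real \<Rightarrow> real \<Rightarrow> real \<Rightarrow> nat \<Rightarrow> (nat \<Rightarrow> ('a,'o,'r) env)
    \<Rightarrow> (nat \<Rightarrow> ('a,'o,'r) policy) \<Rightarrow> (('a,'o,'r) hist \<Rightarrow> nat set \<Rightarrow> nat \<times> nat \<times> nat)
    \<Rightarrow> ('a,'o,'r) hist \<Rightarrow> merl_state" where
  "merl_run rew \<gamma> \<epsilon> \<delta> N env opt tb h =
     fst (foldl (\<lambda>(s, hp) x. (merl_step rew \<gamma> \<epsilon> \<delta> N env opt tb s hp x, hp @ [x]))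
                (merl_init N, []) h)"

text \<open>MERL's policy.  (If M_t = {} the paper's action is undefined; we then act with
opt 0, which is irrelevant for the statement.)\<close>
definition merl_policy :: "('r \<Rightarrow> real) \<Rightarrow> real \<Rightarrow> real \<Rightarrow> real \<Rightarrow> nat \<Rightarrow> (nat \<Rightarrow> ('a,'o,'r) env)
    \<Rightarrow> (nat \<Rightarrow> ('a,'o,'r) policy) \<Rightarrow> (('a,'o,'r) hist \<Rightarrow> nat set \<Rightarrow> nat \<times> nat \<times> nat)
    \<Rightarrow> ('a,'o,'r) policy" where
  "merl_policy rew \<gamma> \<epsilon> \<delta> N env opt tb h =
     (let s = merl_run rew \<gamma> \<epsilon> \<delta> N env opt tb h in
      case phase s of
        Some ph \<Rightarrow> opt (phase_pol ph) h
      | None \<Rightarrow>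
          (case merl_decide rew \<gamma> \<epsilon> env opt tb (Ms s) h of
             Some (u, l, p) \<Rightarrow> opt p h
           | None \<Rightarrow> (if Ms s = {} then opt 0 h else opt (LEAST i. i \<in> Ms s) h)))"

definition is_interaction_measure :: "('a,'o,'r) env \<Rightarrow> ('a,'o,'r) policy
    \<Rightarrow> ('a \<times> 'o \<times> 'r) stream measure \<Rightarrow> bool" where
  "is_interaction_measure \<nu> \<pi> P \<longleftrightarrow>
     prob_space P \<and> sets P = sets (stream_space (count_space UNIV)) \<and>
     (\<forall>h. measure P {\<omega> \<in> space P. stake (length h) \<omega> = h} = pmf (hist_ext \<nu> \<pi> [] (length h)) h)"

end

theory Submission
  imports Defs
begin

text \<open>
  Let \<mu> = env i0 be the true environment.  Every exploration phase appends
  to a statistics list of \<mu> the value (1-\<gamma>)(V - R) or (1-\<gamma>)(R - V), where R is the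
  discounted return of the phase and V the d-step value, in \<mu> itself, of the policy
  followed; under P_{\<mu>,\<pi>} this increment has mean zero and range of width 1.  (Since
  a phase only starts when Delta > \<epsilon>/4, its \<kappa> is always 0, so a single list matters.)
  For such lists L the exponential potential
      sum_{1 \<le> n \<le> M} exp(l_n (S_n - c_n) + l_n^2 max(n - |L|, 0) / 8),
  with c_n the removal threshold, l_n = 4 c_n / n and S_n the sum of the first n entries,
  is a supermartingale by Hoeffding's lemma.  It starts below 2 \<delta>1^2 \<le> \<delta>/4 and is at
  least 1 once the removal test for \<mu> fires; so after T steps \<mu> has been removed with
  probability at most \<delta>/4 (Markov).  Continuity of P along the decreasing events
  "\<mu> \<in> M_t for all t \<le> T" gives the theorem.
\<close>

section \<open>Finite-horizon interaction distributions\<close>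

lemma hist_ext_support:
  "h' \<in> set_pmf (hist_ext \<nu> \<pi> h n) \<Longrightarrow> \<exists>xs. h' = h @ xs \<and> length xs = n"
proof (induction n arbitrary: h')
  case 0
  then show ?case by simp
next
  case (Suc n)
  then obtain h'' obr where h'': "h'' \<in> set_pmf (hist_ext \<nu> \<pi> h n)"
    and h': "h' = (case obr of (ob, r) \<Rightarrow> h'' @ [(\<pi> h'', ob, r)])"
    by auto
  from Suc.IH[OF h''] obtain xs where "h'' = h @ xs" "length xs = n" by blast
  then show ?case using h' by (cases obr) auto
qed

lemma hist_ext_add:
  "hist_ext \<nu> \<pi> h (n + m) = bind_pmf (hist_ext \<nu> \<pi> h n) (\<lambda>h'. hist_ext \<nu> \<pi> h' m)"
  by (induction m) (simp_all add: bind_return_pmf' bind_assoc_pmf)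

lemma hist_ext_Suc_first:
  "hist_ext \<nu> \<pi> h (Suc m) = bind_pmf (hist_ext \<nu> \<pi> h 1) (\<lambda>h'. hist_ext \<nu> \<pi> h' m)"
  using hist_ext_add[of \<nu> \<pi> h 1 m] by simp

lemma hist_ext_cong:
  assumes "\<And>xs. length xs < n \<Longrightarrow> \<pi>1 (h @ xs) = \<pi>2 (h @ xs)"
  shows "hist_ext \<nu> \<pi>1 h n = hist_ext \<nu> \<pi>2 h n"
  using assms
proof (induction n)
  case 0
  then show ?case by simp
next
  case (Suc n)
  have IH: "hist_ext \<nu> \<pi>1 h n = hist_ext \<nu> \<pi>2 h n" using Suc by simp
  show ?case
    unfolding hist_ext.simps IH
  proof (rule bind_pmf_cong[OF refl])
    fix h' assume "h' \<in> set_pmf (hist_ext \<nu> \<pi>2 h n)"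
    then obtain xs where "h' = h @ xs" "length xs = n" using hist_ext_support by blast
    then have "\<pi>1 h' = \<pi>2 h'" using Suc.prems by simp
    then show "map_pmf (\<lambda>(ob, r). h' @ [(\<pi>1 h', ob, r)]) (\<nu> h' (\<pi>1 h')) =
               map_pmf (\<lambda>(ob, r). h' @ [(\<pi>2 h', ob, r)]) (\<nu> h' (\<pi>2 h'))" by simp
  qed
qed

lemma finite_set_pmf_hist_ext:
  "finite (set_pmf (hist_ext \<nu> \<pi> h n :: ('a::finite \<times> 'o::finite \<times> 'r::finite) list pmf))"
proof (rule finite_subset)
  show "set_pmf (hist_ext \<nu> \<pi> h n) \<subseteq> (\<lambda>xs. h @ xs) ` {xs. set xs \<subseteq> UNIV \<and> length xs = n}"
    using hist_ext_support by fastforce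
  show "finite ((\<lambda>xs. h @ xs) ` {xs. set xs \<subseteq> (UNIV :: ('a \<times> 'o \<times> 'r) set) \<and> length xs = n})"
    by (intro finite_imageI finite_lists_length_eq) simp
qed

section \<open>Events on finitely many steps under the stream measure\<close>

lemma stake_event_sets:
  fixes P :: "('a::countable \<times> 'o::countable \<times> 'r::countable) stream measure"
  assumes "is_interaction_measure \<nu> \<pi> P"
  shows "{\<omega> \<in> space P. stake T \<omega> \<in> A} \<in> sets P"
proof -
  have sP: "sets P = sets (stream_space (count_space UNIV))"
    using assms unfolding is_interaction_measure_def by blast
  have "stake T \<in> measurable P (count_space UNIV)"
    using measurable_stake[of T] by (simp add: measurable_cong_sets[OF sP refl])
  from measurable_sets[OF this, of A] show ?thesis
    by (simp add: vimage_def Int_def conj_commute)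
qed

lemma interaction_measure_stake:
  fixes P :: "('a::finite \<times> 'o::finite \<times> 'r::finite) stream measure"
  assumes P: "is_interaction_measure \<nu> \<pi> P"
  shows "measure P {\<omega> \<in> space P. stake T \<omega> \<in> A} = measure_pmf.prob (hist_ext \<nu> \<pi> [] T) A"
proof -
  let ?Q = "hist_ext \<nu> \<pi> [] T"
  define S where "S = {h \<in> A. length h = T}"
  interpret prob_space P using P unfolding is_interaction_measure_def by blast
  have cyl: "\<And>h. measure P {\<omega> \<in> space P. stake (length h) \<omega> = h} = pmf (hist_ext \<nu> \<pi> [] (length h)) h"
    using P unfolding is_interaction_measure_def by auto
  have finS: "finite S"
    by (rule finite_subset[OF _ finite_lists_length_eq[of "UNIV :: ('a \<times> 'o \<times> 'r) set" T]])
      (auto simp: S_def)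
  have "{\<omega> \<in> space P. stake T \<omega> \<in> A} = (\<Union>h\<in>S. {\<omega> \<in> space P. stake T \<omega> = h})"
    unfolding S_def by auto
  then have "measure P {\<omega> \<in> space P. stake T \<omega> \<in> A}
      = (\<Sum>h\<in>S. measure P {\<omega> \<in> space P. stake T \<omega> = h})"
    by (simp only:, intro finite_measure_finite_Union finS)
      (use stake_event_sets[OF P, of T "{_}"] in \<open>auto simp: disjoint_family_on_def\<close>)
  also have "\<dots> = (\<Sum>h\<in>S. pmf ?Q h)"
  proof (rule sum.cong[OF refl])
    fix h assume "h \<in> S"
    then have "length h = T" by (simp add: S_def)
    then show "measure P {\<omega> \<in> space P. stake T \<omega> = h} = pmf ?Q h" using cyl[of h] by simp
  qed
  also have "\<dots> = measure_pmf.prob ?Q S"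
    by (rule measure_measure_pmf_finite[OF finS, symmetric])
  also have "\<dots> = measure_pmf.prob ?Q A"
  proof -
    have "S \<inter> set_pmf ?Q = A \<inter> set_pmf ?Q"
      using hist_ext_support[of _ \<nu> \<pi> "[]" T] by (auto simp: S_def)
    then show ?thesis by (metis measure_Int_set_pmf)
  qed
  finally show ?thesis .
qed

lemma (in prob_space) prob_always_ge:
  assumes ev: "\<And>t. {\<omega> \<in> space M. Q t \<omega>} \<in> events"
    and down: "\<And>t \<omega>. Q (Suc t) \<omega> \<Longrightarrow> Q t \<omega>"
    and bound: "\<And>t. p \<le> prob {\<omega> \<in> space M. Q t \<omega>}"
  shows "p \<le> prob {\<omega> \<in> space M. \<forall>t. Q t \<omega>}"
proof -
  let ?A = "\<lambda>t. {\<omega> \<in> space M. Q t \<omega>}"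
  have "decseq ?A" by (rule decseq_SucI) (auto intro: down)
  then have "(\<lambda>t. prob (?A t)) \<longlonglongrightarrow> prob (\<Inter>t. ?A t)"
    by (intro finite_Lim_measure_decseq) (use ev in auto)
  also have "(\<Inter>t. ?A t) = {\<omega> \<in> space M. \<forall>t. Q t \<omega>}" by auto
  finally show ?thesis by (rule LIMSEQ_le_const) (use bound in blast)
qed


section \<open>An exponential potential for bounded zero-mean increments\<close>

text \<open>For a confidence parameter c in (0,1), a list L of increments and n \<ge> 1, the
  threshold of the removal test, the Chernoff tilt used for it, and the exponential
  potential of the first n entries of L (compensated for the entries still missing).\<close>

definition threshold :: "real \<Rightarrow> nat \<Rightarrow> real" where
  "threshold c n = sqrt (2 * real n * ln (real n / c))"

definition tilt :: "real \<Rightarrow> nat \<Rightarrow> real" where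
  "tilt c n = 4 * threshold c n / real n"

definition pot_term :: "real \<Rightarrow> nat \<Rightarrow> real list \<Rightarrow> real" where
  "pot_term c n L = exp (tilt c n * (sum_list (take n L) - threshold c n)
      + (tilt c n)^2 * (real n - real (min (length L) n)) / 8)"

definition potential :: "real \<Rightarrow> nat \<Rightarrow> real list \<Rightarrow> ennreal" where
  "potential c M L = (\<Sum>n\<in>{1..M}. ennreal (pot_term c n L))"

lemma ln_ratio_pos: "0 < c \<Longrightarrow> c < 1 \<Longrightarrow> 1 \<le> n \<Longrightarrow> 0 < ln (real n / c)"
  by (intro ln_gt_zero) (simp add: less_divide_eq)

lemma tilt_pos: "0 < c \<Longrightarrow> c < 1 \<Longrightarrow> 1 \<le> n \<Longrightarrow> 0 < tilt c n"
  using ln_ratio_pos unfolding tilt_def threshold_def by simp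

lemma pot_term_snoc:
  assumes "length L < n"
  shows "pot_term c n (L @ [y]) = pot_term c n L * exp (- ((tilt c n)^2 / 8)) * exp (tilt c n * y)"
proof -
  let ?l = "tilt c n" and ?t = "threshold c n"
  have "pot_term c n (L @ [y]) = exp (?l * (sum_list L + y - ?t) + ?l^2 * (real n - real (Suc (length L))) / 8)"
    using assms by (simp add: pot_term_def)
  also have "\<dots> = exp ((?l * (sum_list L - ?t) + ?l^2 * (real n - real (length L)) / 8)
      + (- (?l^2 / 8)) + ?l * y)"
    by (rule arg_cong[where f = exp]) (simp add: field_simps)
  also have "\<dots> = pot_term c n L * exp (- (?l^2 / 8)) * exp (?l * y)"
    using assms unfolding pot_term_def mult_exp_exp by (simp add: algebra_simps)
  finally show ?thesis .
qed

lemma pot_term_snoc_saturated: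
  "n \<le> length L \<Longrightarrow> pot_term c n (L @ [y]) = pot_term c n L"
  unfolding pot_term_def by simp

lemma hoeffding_pmf:
  fixes Q :: "'b pmf"
  assumes bd: "\<forall>x\<in>set_pmf Q. a \<le> f x \<and> f x \<le> a + 1" and E0: "measure_pmf.expectation Q f = 0"
    and l: "l > 0"
  shows "(\<integral>\<^sup>+x. ennreal (exp (l * f x)) \<partial>Q) \<le> ennreal (exp (l^2 / 8))"
proof -
  have "interval_bounded_random_variable (measure_pmf Q) f a (a + 1)"
    unfolding interval_bounded_random_variable_def interval_bounded_random_variable_axioms_def
    using bd by (auto simp: prob_space_measure_pmf AE_measure_pmf_iff)
  from interval_bounded_random_variable.Hoeffdings_lemma_nn_integral_0[OF this l E0]
  show ?thesis by simp
qed

lemma potential_step: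
  fixes Q :: "'b pmf"
  assumes c: "0 < c" "c < 1"
    and bd: "\<forall>x\<in>set_pmf Q. a \<le> f x \<and> f x \<le> a + 1" and E0: "measure_pmf.expectation Q f = 0"
  shows "(\<integral>\<^sup>+x. potential c M (L @ [f x]) \<partial>Q) \<le> potential c M L"
proof -
  have "(\<integral>\<^sup>+x. potential c M (L @ [f x]) \<partial>Q) = (\<Sum>n\<in>{1..M}. \<integral>\<^sup>+x. ennreal (pot_term c n (L @ [f x])) \<partial>Q)"
    unfolding potential_def by (rule nn_integral_sum) simp
  also have "\<dots> \<le> (\<Sum>n\<in>{1..M}. ennreal (pot_term c n L))"
  proof (rule sum_mono)
    fix n assume n: "n \<in> {1..M}"
    show "(\<integral>\<^sup>+x. ennreal (pot_term c n (L @ [f x])) \<partial>Q) \<le> ennreal (pot_term c n L)"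
    proof (cases "n \<le> length L")
      case True
      then show ?thesis by (simp add: pot_term_snoc_saturated measure_pmf.emeasure_space_1)
    next
      case False
      let ?C = "pot_term c n L * exp (- ((tilt c n)^2 / 8))"
      have C0: "?C \<ge> 0" unfolding pot_term_def by simp
      have "(\<integral>\<^sup>+x. ennreal (pot_term c n (L @ [f x])) \<partial>Q) = (\<integral>\<^sup>+x. ennreal ?C * ennreal (exp (tilt c n * f x)) \<partial>Q)"
        using False C0 by (simp add: pot_term_snoc ennreal_mult)
      also have "\<dots> = ennreal ?C * (\<integral>\<^sup>+x. ennreal (exp (tilt c n * f x)) \<partial>Q)"
        by (rule nn_integral_cmult) simp
      also have "\<dots> \<le> ennreal ?C * ennreal (exp ((tilt c n)^2 / 8))"
        using hoeffding_pmf[OF bd E0 tilt_pos[OF c]] n by (intro mult_left_mono) auto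
      also have "\<dots> = ennreal (pot_term c n L)"
        using C0 by (simp add: ennreal_mult[symmetric] mult.assoc exp_add[symmetric])
      finally show ?thesis .
    qed
  qed
  also have "\<dots> = potential c M L" unfolding potential_def ..
  finally show ?thesis .
qed

lemma sum_inverse_squares_le: "1 \<le> M \<Longrightarrow> (\<Sum>n\<in>{1..M}. 1 / (real n)^2) \<le> 2 - 1 / real M"
proof (induction M rule: nat_induct_at_least)
  case base
  then show ?case by simp
next
  case (Suc M)
  have "1 / (real (Suc M))^2 \<le> 1 / (real M * real (Suc M))"
    using Suc.hyps by (intro divide_left_mono) (auto simp: power2_eq_square)
  also have "\<dots> = 1 / real M - 1 / real (Suc M)" using Suc.hyps by (simp add: field_simps)
  finally show ?case using Suc.IH by (simp add: sum.cl_ivl_Suc)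
qed

text \<open>Initially the n-th term is (c/n)^4 \<le> (c/n)^2, so the potential is at most 2 c^2.\<close>
lemma pot_term_Nil:
  assumes c: "0 < c" "c < 1" and n: "1 \<le> n"
  shows "pot_term c n [] \<le> c^2 / (real n)^2"
proof -
  have lnp: "0 < ln (real n / c)" using ln_ratio_pos[OF c n] .
  have thr2: "(threshold c n)^2 = 2 * real n * ln (real n / c)" unfolding threshold_def using lnp n by simp
  have "pot_term c n [] = exp (- (tilt c n * threshold c n) + (tilt c n)^2 * real n / 8)"
    unfolding pot_term_def by simp
  also have "- (tilt c n * threshold c n) + (tilt c n)^2 * real n / 8 = - 2 * (threshold c n)^2 / real n"
    unfolding tilt_def using n by (simp add: field_simps power2_eq_square)
  also have "\<dots> = - 4 * ln (real n / c)" unfolding thr2 using n by simp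
  also have "exp (- 4 * ln (real n / c)) \<le> exp (- 2 * ln (real n / c))" using lnp by simp
  also have "exp (- 2 * ln (real n / c)) = (real n / c) powr (-2)"
    using n c by (simp add: powr_def)
  also have "\<dots> = c^2 / (real n)^2"
    using n c by (simp add: powr_minus power_divide divide_simps)
  finally show ?thesis .
qed

lemma potential_Nil:
  assumes c: "0 < c" "c < 1"
  shows "potential c M [] \<le> ennreal (2 * c^2)"
proof -
  have "(\<Sum>n\<in>{1..M}. pot_term c n []) \<le> (\<Sum>n\<in>{1..M}. c^2 * (1 / (real n)^2))"
    by (intro sum_mono) (use pot_term_Nil[OF c] in auto)
  also have "\<dots> = c^2 * (\<Sum>n\<in>{1..M}. 1 / (real n)^2)" by (simp add: sum_distrib_left)
  also have "\<dots> \<le> c^2 * 2"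
  proof (cases "M = 0")
    case False
    then have "(\<Sum>n\<in>{1..M}. 1 / (real n)^2) \<le> 2 - 1 / real M"
      by (intro sum_inverse_squares_le) simp
    moreover have "0 \<le> 1 / real M" by simp
    ultimately have "(\<Sum>n\<in>{1..M}. 1 / (real n)^2) \<le> 2" by linarith
    then show ?thesis by (intro mult_left_mono) auto
  qed simp
  finally have "(\<Sum>n\<in>{1..M}. pot_term c n []) \<le> 2 * c^2" by simp
  moreover have "potential c M [] = ennreal (\<Sum>n\<in>{1..M}. pot_term c n [])"
    unfolding potential_def by (subst sum_ennreal) (auto simp: pot_term_def)
  ultimately show ?thesis by (simp add: ennreal_leI)
qed

lemma potential_threshold_crossed:
  assumes c: "0 < c" "c < 1" and n: "1 \<le> length L" "length L \<le> M"
    and S: "threshold c (length L) \<le> sum_list L"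
  shows "1 \<le> potential c M L"
proof -
  let ?n = "length L"
  have "1 \<le> exp (tilt c ?n * (sum_list L - threshold c ?n))"
    using S tilt_pos[OF c n(1)] by simp
  also have "\<dots> = pot_term c ?n L" unfolding pot_term_def by simp
  finally have "(1::ennreal) \<le> ennreal (pot_term c ?n L)" by (simp add: ennreal_leI)
  also have "ennreal (pot_term c ?n L) \<le> potential c M L"
    unfolding potential_def using n by (intro member_le_sum) auto
  finally show ?thesis .
qed

section \<open>Bookkeeping of the MERL state\<close>

lemma merl_kappa_eq_0: "\<epsilon> / 4 < D \<Longrightarrow> merl_kappa \<epsilon> D = 0"
  unfolding merl_kappa_def by (rule Least_eq_0) (simp add: powr_minus)

text \<open>The fixed parameters of MERL together with the index i0 of the true environment;
  only the hypotheses of the theorem that the argument uses are assumed.\<close>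
locale merl_setting =
  fixes rew :: "'r::finite \<Rightarrow> real"
    and env :: "nat \<Rightarrow> ('a::finite, 'o::finite, 'r) env"
    and opt :: "nat \<Rightarrow> ('a, 'o, 'r) policy"
    and tb :: "('a, 'o, 'r) hist \<Rightarrow> nat set \<Rightarrow> nat \<times> nat \<times> nat"
    and \<gamma> \<epsilon> \<delta> :: real
    and N i0 :: nat
  assumes rew_bounds: "\<forall>x. 0 \<le> rew x \<and> rew x \<le> 1"
    and \<gamma>_pos: "0 < \<gamma>" and \<gamma>_lt_1: "\<gamma> < 1"
    and \<epsilon>_pos: "0 < \<epsilon>" and \<epsilon>_le_1: "\<epsilon> \<le> 1"
    and \<delta>_pos: "0 < \<delta>" and \<delta>_lt_1: "\<delta> < 1"
    and tiebreak: "valid_tiebreak rew \<gamma> \<epsilon> N env opt tb"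
    and i0_lt_N: "i0 < N"
begin

abbreviation "d \<equiv> merl_d \<gamma> \<epsilon>"
abbreviation "run \<equiv> merl_run rew \<gamma> \<epsilon> \<delta> N env opt tb"
abbreviation "step \<equiv> merl_step rew \<gamma> \<epsilon> \<delta> N env opt tb"
abbreviation "pol \<equiv> merl_policy rew \<gamma> \<epsilon> \<delta> N env opt tb"
abbreviation "decide \<equiv> merl_decide rew \<gamma> \<epsilon> env opt tb"
abbreviation "finalize \<equiv> merl_finalize \<gamma> \<epsilon> \<delta> N"
abbreviation "advance \<equiv> merl_advance rew \<gamma> \<epsilon> \<delta> N"

lemma run_Nil: "run [] = merl_init N"
  by (simp add: merl_run_def)

lemma run_snoc: "run (h @ [x]) = step (run h) h x"
proof -
  let ?F = "\<lambda>(s, hp) x. (step s hp x, hp @ [x])"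
  have "snd (foldl ?F (s0, hp0) h) = hp0 @ h" for s0 hp0
    by (induction h arbitrary: s0 hp0) auto
  then have run_fold: "foldl ?F (merl_init N, []) h = (run h, h)"
    unfolding merl_run_def by (simp add: prod_eq_iff)
  have "run (h @ [x]) = fst (?F (foldl ?F (merl_init N, []) h) x)"
    by (simp add: merl_run_def)
  also have "\<dots> = step (run h) h x" by (simp add: run_fold)
  finally show ?thesis .
qed

lemma merl_d_ge_1: "1 \<le> d"
proof -
  have "(1 - \<gamma>) * \<epsilon> \<le> 1" and "0 < (1 - \<gamma>) * \<epsilon>"
    using \<gamma>_pos \<gamma>_lt_1 \<epsilon>_pos \<epsilon>_le_1 by (simp_all add: mult_le_one)
  then have "0 < ln (8 / ((1 - \<gamma>) * \<epsilon>))" by (intro ln_gt_zero) (simp add: less_divide_eq)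
  then have "0 < (1 / (1 - \<gamma>)) * ln (8 / ((1 - \<gamma>) * \<epsilon>))" using \<gamma>_lt_1 by simp
  then show ?thesis unfolding merl_d_def by linarith
qed

lemma advance_Phase:
  "advance s (Phase u l p \<kappa> vu vl k R) r =
    (if Suc k \<ge> d then finalize s u l \<kappa> vu vl (R + \<gamma> ^ k * rew r)
     else s\<lparr>phase := Some (Phase u l p \<kappa> vu vl (Suc k) (R + \<gamma> ^ k * rew r))\<rparr>)"
  by (simp add: merl_advance_def Let_def)

lemma finalize_Ms_subset: "Ms (finalize s u l \<kappa> vu vl R) \<subseteq> Ms s"
  by (auto simp: merl_finalize_def Let_def)

lemma finalize_phase: "phase (finalize s u l \<kappa> vu vl R) = None"
  by (simp add: merl_finalize_def Let_def)

lemma finalize_phase_upd: "finalize (s\<lparr>phase := z\<rparr>) u l \<kappa> vu vl R = finalize s u l \<kappa> vu vl R"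
  by (simp add: merl_finalize_def Let_def)

lemma finalize_Xs:
  "u \<noteq> l \<Longrightarrow> Xs (finalize s u l \<kappa> vu vl R) i \<kappa>' =
   (if i = u \<and> \<kappa>' = \<kappa> then Xs s i \<kappa>' @ [(1 - \<gamma>) * (vu - R)]
    else if i = l \<and> \<kappa>' = \<kappa> then Xs s i \<kappa>' @ [(1 - \<gamma>) * (R - vl)]
    else Xs s i \<kappa>')"
  by (auto simp: merl_finalize_def Let_def)

lemma finalize_removed:
  assumes "i \<in> Ms s" "i \<notin> Ms (finalize s u l \<kappa> vu vl R)"
  shows "\<exists>\<kappa>'. removal_cond \<gamma> \<epsilon> \<delta> N (Xs (finalize s u l \<kappa> vu vl R) i \<kappa>')"
proof -
  have "Ms (finalize s u l \<kappa> vu vl R) =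
      {\<nu> \<in> Ms s. \<not> (\<exists>\<kappa>'. removal_cond \<gamma> \<epsilon> \<delta> N (Xs (finalize s u l \<kappa> vu vl R) \<nu> \<kappa>'))}"
    by (simp only: merl_finalize_def Let_def merl_state.select_convs)
  then show ?thesis using assms by blast
qed

text \<open>The removal test is only applied at lengths \<alpha>_j \<ge> 1, so empty lists never fire.\<close>
lemma removal_cond_length:
  assumes "removal_cond \<gamma> \<epsilon> \<delta> N xs"
  shows "1 \<le> length xs"
proof -
  obtain j where j: "length xs = merl_alpha_j N j"
    using assms unfolding removal_cond_def by blast
  have "1 \<le> sqrt (real N)" using i0_lt_N by simp
  then have "1 \<le> 4 * sqrt (real N) - 1" by linarith
  then have "1 \<le> merl_alpha N" unfolding merl_alpha_def by (simp add: le_divide_eq)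
  then have "1 \<le> merl_alpha N ^ j" by (rule one_le_power)
  then show ?thesis unfolding j merl_alpha_j_def by linarith
qed

lemma decide_Some:
  assumes "decide M h = Some (u, l, p)" "M \<subseteq> {..<N}"
  shows "u \<in> M" "l \<in> M" "u \<noteq> l"
    "merl_kappa \<epsilon> (merl_Delta rew \<gamma> \<epsilon> env opt h (u, l, p)) = 0"
proof -
  have "M \<noteq> {}" and tbh: "tb h M = (u, l, p)"
    and D: "\<epsilon> / 4 < merl_Delta rew \<gamma> \<epsilon> env opt h (u, l, p)"
    using assms(1) by (auto simp: merl_decide_def split: if_splits)
  then have "tb h M \<in> M \<times> M \<times> M" using tiebreak assms(2) unfolding valid_tiebreak_def by blast
  then show "u \<in> M" "l \<in> M" using tbh by auto
  show "u \<noteq> l" using D \<epsilon>_pos by (auto simp: merl_Delta_def)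
  show "merl_kappa \<epsilon> (merl_Delta rew \<gamma> \<epsilon> env opt h (u, l, p)) = 0"
    using D by (rule merl_kappa_eq_0)
qed

definition wf_state :: "merl_state \<Rightarrow> nat \<Rightarrow> bool" where
  "wf_state s n \<longleftrightarrow> Ms s \<subseteq> {..<N} \<and> (\<forall>i \<kappa>. \<kappa> \<noteq> 0 \<longrightarrow> Xs s i \<kappa> = []) \<and>
     (\<forall>i. length (Xs s i 0) \<le> n) \<and>
     (\<forall>i<N. i \<notin> Ms s \<longrightarrow> removal_cond \<gamma> \<epsilon> \<delta> N (Xs s i 0)) \<and>
     (\<forall>u l p \<kappa> vu vl k R. phase s = Some (Phase u l p \<kappa> vu vl k R) \<longrightarrow>
        u \<in> Ms s \<and> l \<in> Ms s \<and> u \<noteq> l \<and> \<kappa> = 0 \<and> k < d)"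

lemma wf_state_Suc: "wf_state s n \<Longrightarrow> wf_state s (Suc n)"
  unfolding wf_state_def by (blast intro: le_SucI)

lemma wf_finalize:
  assumes wf: "wf_state s n" and ul: "u \<in> Ms s" "l \<in> Ms s" "u \<noteq> l"
  shows "wf_state (finalize s u l 0 vu vl R) (Suc n)"
proof -
  let ?s = "finalize s u l 0 vu vl R"
  note X = finalize_Xs[OF ul(3), of s 0 vu vl R]
  have in_range: "Ms s \<subseteq> {..<N}"
    and nonzero: "\<And>i \<kappa>. \<kappa> \<noteq> 0 \<Longrightarrow> Xs s i \<kappa> = []"
    and short: "\<And>i. length (Xs s i 0) \<le> n"
    and removed: "\<And>i. i < N \<Longrightarrow> i \<notin> Ms s \<Longrightarrow> removal_cond \<gamma> \<epsilon> \<delta> N (Xs s i 0)"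
    using wf unfolding wf_state_def by blast+
  have "removal_cond \<gamma> \<epsilon> \<delta> N (Xs ?s i 0)" if iN: "i < N" and gone: "i \<notin> Ms ?s" for i
  proof (cases "i \<in> Ms s")
    case True
    then obtain \<kappa>' where rc: "removal_cond \<gamma> \<epsilon> \<delta> N (Xs ?s i \<kappa>')"
      using finalize_removed gone by blast
    have "\<kappa>' = 0"
    proof (rule ccontr)
      assume "\<kappa>' \<noteq> 0"
      then have "Xs ?s i \<kappa>' = []" using X nonzero by simp
      then show False using removal_cond_length[OF rc] by simp
    qed
    then show ?thesis using rc by simp
  next
    case False
    then have "i \<noteq> u" "i \<noteq> l" using ul by auto
    then show ?thesis using X removed[OF iN False] by simp
  qed
  moreover have "Ms ?s \<subseteq> {..<N}" using finalize_Ms_subset in_range by blast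
  moreover have "\<forall>i \<kappa>. \<kappa> \<noteq> 0 \<longrightarrow> Xs ?s i \<kappa> = []" using X nonzero by simp
  moreover have "\<forall>i. length (Xs ?s i 0) \<le> Suc n" using X short by (simp add: le_SucI)
  ultimately show ?thesis unfolding wf_state_def finalize_phase by blast
qed

lemma wf_advance:
  assumes wf: "wf_state s n" and ul: "u \<in> Ms s" "l \<in> Ms s" "u \<noteq> l" and k: "k < d"
  shows "wf_state (advance s (Phase u l p 0 vu vl k R) r) (Suc n)"
proof (cases "Suc k \<ge> d")
  case True
  then show ?thesis using wf_finalize[OF wf ul] by (simp add: advance_Phase)
next
  case False
  then show ?thesis using wf_state_Suc[OF wf] ul unfolding wf_state_def
    by (simp add: advance_Phase)
qed

lemma wf_step:
  assumes wf: "wf_state s n"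
  shows "wf_state (step s h x) (Suc n)"
proof (cases "phase s")
  case (Some ph)
  then obtain u l p \<kappa> vu vl k R where ph: "ph = Phase u l p \<kappa> vu vl k R" by (cases ph) auto
  then have props: "u \<in> Ms s" "l \<in> Ms s" "u \<noteq> l" "\<kappa> = 0" "k < d"
    using wf Some unfolding wf_state_def by blast+
  then show ?thesis using wf_advance[OF wf props(1-3,5)] Some ph by (simp add: merl_step_def)
next
  case None
  show ?thesis
  proof (cases "decide (Ms s) h")
    case None2: None
    then show ?thesis using None wf_state_Suc[OF wf] by (simp add: merl_step_def)
  next
    case (Some y)
    then obtain u l p where y: "decide (Ms s) h = Some (u, l, p)" by (cases y) auto
    have "Ms s \<subseteq> {..<N}" using wf unfolding wf_state_def by blast
    note ds = decide_Some[OF y this]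
    show ?thesis using None y ds(4) wf_advance[OF wf ds(1-3)] merl_d_ge_1
      by (simp add: merl_step_def Let_def)
  qed
qed

lemma wf_run: "wf_state (run h) (length h)"
proof (induction h rule: rev_induct)
  case Nil
  then show ?case by (simp add: run_Nil merl_init_def wf_state_def)
next
  case (snoc x xs)
  then show ?case by (simp add: run_snoc wf_step)
qed

lemma step_Ms_subset: "Ms (step s h x) \<subseteq> Ms s"
proof -
  have "Ms (advance s ph r) \<subseteq> Ms s" for ph r
    by (cases ph) (auto simp: advance_Phase dest: set_mp[OF finalize_Ms_subset])
  then show ?thesis unfolding merl_step_def
    by (auto simp: Let_def split: option.splits)
qed

lemma run_Ms_antimono: "Ms (run (h @ xs)) \<subseteq> Ms (run h)"
proof (induction xs rule: rev_induct)
  case (snoc x xs)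
  then show ?case using step_Ms_subset[of "run (h @ xs)" "h @ xs" x]
    by (simp add: run_snoc[of "h @ xs", simplified])
qed simp

definition discounted_return :: "('a \<times> 'o \<times> 'r) list \<Rightarrow> real" where
  "discounted_return xs = (\<Sum>k<length xs. \<gamma> ^ k * rew (snd (snd (xs ! k))))"

lemma discounted_return_snoc:
  "discounted_return (xs @ [x]) = discounted_return xs + \<gamma> ^ length xs * rew (snd (snd x))"
  unfolding discounted_return_def by (simp add: nth_append)

lemma run_during_phase:
  assumes ph: "phase (run h) = None" and dc: "decide (Ms (run h)) h = Some (u, l, p)"
    and len: "1 \<le> length xs" "length xs \<le> d"
  defines "vu \<equiv> Vfin rew \<gamma> (env u) (opt p) h d" and "vl \<equiv> Vfin rew \<gamma> (env l) (opt p) h d"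
  shows "run (h @ xs) = (if length xs < d
      then (run h)\<lparr>phase := Some (Phase u l p 0 vu vl (length xs) (discounted_return xs))\<rparr>
      else finalize (run h) u l 0 vu vl (discounted_return xs))"
  using len
proof (induction xs rule: rev_induct)
  case (snoc x xs)
  have "Ms (run h) \<subseteq> {..<N}" using wf_run[of h] unfolding wf_state_def by blast
  note ds = decide_Some[OF dc this]
  show ?case
  proof (cases "xs = []")
    case True
    have "run (h @ xs @ [x]) = advance (run h) (Phase u l p 0 vu vl 0 0) (snd (snd x))"
      using True ph dc ds(4) by (simp add: run_snoc merl_step_def Let_def vu_def vl_def)
    then show ?thesis using True by (simp add: advance_Phase discounted_return_def)
  next
    case False
    then have "1 \<le> length xs" "length xs < d" using snoc.prems by (auto simp: Suc_le_eq)
    then have IH: "run (h @ xs) = (run h)\<lparr>phase := Some (Phase u l p 0 vu vl (length xs) (discounted_return xs))\<rparr>"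
      using snoc.IH by simp
    have "run (h @ xs @ [x]) = advance (run (h @ xs)) (Phase u l p 0 vu vl (length xs) (discounted_return xs)) (snd (snd x))"
      using run_snoc[of "h @ xs" x] unfolding IH by (simp add: merl_step_def)
    then show ?thesis unfolding IH by (simp add: advance_Phase discounted_return_snoc finalize_phase_upd)
  qed
qed simp

lemma policy_during_phase:
  assumes ph: "phase (run h) = None" and dc: "decide (Ms (run h)) h = Some (u, l, p)"
    and len: "length xs < d"
  shows "pol (h @ xs) = opt p (h @ xs)"
proof (cases "xs = []")
  case True
  then show ?thesis using ph dc by (simp add: merl_policy_def)
next
  case False
  then show ?thesis using run_during_phase[OF ph dc, of xs] len
    by (simp add: Suc_le_eq merl_policy_def phase_pol_def)
qed

section \<open>The true model survives with high probability\<close>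

abbreviation "\<mu> \<equiv> env i0"
abbreviation "\<delta>1 \<equiv> merl_delta1 \<gamma> \<epsilon> \<delta> N"

lemma delta1_bounds: "0 < \<delta>1" "\<delta>1 \<le> \<delta> / 32"
proof -
  define X where "X = 32 * real (card (merl_K \<gamma> \<epsilon>)) * real N powr (3/2)"
  have "1 \<le> real (card (merl_K \<gamma> \<epsilon>))" unfolding merl_K_def by simp
  moreover have "1 \<le> real N powr (3/2)" using i0_lt_N by (intro ge_one_powr_ge_zero) auto
  ultimately have X: "32 \<le> X"
    unfolding X_def using mult_mono[of 1 "real (card (merl_K \<gamma> \<epsilon>))" 1 "real N powr (3/2)"] by simp
  have "\<delta>1 = \<delta> / X" unfolding X_def merl_delta1_def ..
  moreover have "\<delta> / X \<le> \<delta> / 32" using X \<delta>_pos by (intro divide_left_mono) auto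
  ultimately show "0 < \<delta>1" "\<delta>1 \<le> \<delta> / 32" using X \<delta>_pos by auto
qed

lemma delta1_lt_1: "\<delta>1 < 1"
  using delta1_bounds \<delta>_lt_1 by simp

lemma potential_Nil_le: "potential \<delta>1 M [] \<le> ennreal (\<delta> / 4)"
proof -
  have "\<delta>1^2 \<le> \<delta>1" using delta1_bounds delta1_lt_1 by (simp add: power2_eq_square mult_le_one)
  then have "2 * \<delta>1^2 \<le> \<delta> / 4" using delta1_bounds by simp
  then show ?thesis
    using potential_Nil[OF delta1_bounds(1) delta1_lt_1, of M] by (simp add: ennreal_leI order_trans)
qed

definition phase_return :: "('a, 'o, 'r) hist \<Rightarrow> ('a, 'o, 'r) hist \<Rightarrow> real" where
  "phase_return h h' = (\<Sum>k<d. \<gamma> ^ k * rew_at rew h' (length h + k))"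

lemma phase_return_append: "length xs = d \<Longrightarrow> phase_return h (h @ xs) = discounted_return xs"
  unfolding phase_return_def discounted_return_def rew_at_def by (simp add: nth_append)

lemma phase_return_bounds: "0 \<le> (1 - \<gamma>) * phase_return h h'" "(1 - \<gamma>) * phase_return h h' \<le> 1"
proof -
  have r: "\<And>k. 0 \<le> rew_at rew h' k \<and> rew_at rew h' k \<le> 1"
    unfolding rew_at_def using rew_bounds by blast
  have "0 \<le> phase_return h h'" unfolding phase_return_def using r \<gamma>_pos by (intro sum_nonneg) simp
  then show "0 \<le> (1 - \<gamma>) * phase_return h h'" using \<gamma>_lt_1 by simp
  have "phase_return h h' \<le> (\<Sum>k<d. \<gamma> ^ k)" unfolding phase_return_def
    using r \<gamma>_pos by (intro sum_mono) (simp add: mult_left_le)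
  then have "(1 - \<gamma>) * phase_return h h' \<le> (1 - \<gamma>) * (\<Sum>k<d. \<gamma> ^ k)"
    using \<gamma>_lt_1 by (intro mult_left_mono) auto
  also have "\<dots> = 1 - \<gamma> ^ d" by (rule one_diff_power_eq[symmetric])
  also have "\<dots> \<le> 1" using \<gamma>_pos by simp
  finally show "(1 - \<gamma>) * phase_return h h' \<le> 1" .
qed

lemma potential_return_increment:
  fixes Q :: "'b pmf" and R :: "'b \<Rightarrow> real"
  assumes bd: "\<forall>x\<in>set_pmf Q. 0 \<le> (1 - \<gamma>) * R x \<and> (1 - \<gamma>) * R x \<le> 1"
    and int: "integrable (measure_pmf Q) R" and ER: "measure_pmf.expectation Q R = v"
  shows "(\<integral>\<^sup>+x. potential \<delta>1 M (L @ [(1 - \<gamma>) * (v - R x)]) \<partial>Q) \<le> potential \<delta>1 M L"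
    and "(\<integral>\<^sup>+x. potential \<delta>1 M (L @ [(1 - \<gamma>) * (R x - v)]) \<partial>Q) \<le> potential \<delta>1 M L"
proof -
  show "(\<integral>\<^sup>+x. potential \<delta>1 M (L @ [(1 - \<gamma>) * (v - R x)]) \<partial>Q) \<le> potential \<delta>1 M L"
  proof (rule potential_step[OF delta1_bounds(1) delta1_lt_1])
    show "\<forall>x\<in>set_pmf Q. (1 - \<gamma>) * v - 1 \<le> (1 - \<gamma>) * (v - R x) \<and> (1 - \<gamma>) * (v - R x) \<le> (1 - \<gamma>) * v - 1 + 1"
      using bd by (auto simp: algebra_simps)
    show "measure_pmf.expectation Q (\<lambda>x. (1 - \<gamma>) * (v - R x)) = 0"
      using int ER by (simp add: measure_pmf.prob_space)
  qed
  show "(\<integral>\<^sup>+x. potential \<delta>1 M (L @ [(1 - \<gamma>) * (R x - v)]) \<partial>Q) \<le> potential \<delta>1 M L"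
  proof (rule potential_step[OF delta1_bounds(1) delta1_lt_1])
    show "\<forall>x\<in>set_pmf Q. - ((1 - \<gamma>) * v) \<le> (1 - \<gamma>) * (R x - v) \<and> (1 - \<gamma>) * (R x - v) \<le> - ((1 - \<gamma>) * v) + 1"
      using bd by (auto simp: algebra_simps)
    show "measure_pmf.expectation Q (\<lambda>x. (1 - \<gamma>) * (R x - v)) = 0"
      using int ER by (simp add: measure_pmf.prob_space)
  qed
qed

text \<open>Key step: an exploration phase, run in the true environment \<mu>, does not increase
  the expected potential of \<mu>'s statistics, because the expected phase return in \<mu>
  is exactly the value V^{\<pi>'}_\<mu>(h;d) that MERL compares it with.\<close>
lemma phase_potential_step:
  assumes ph: "phase (run h) = None" and dc: "decide (Ms (run h)) h = Some (u, l, p)"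
  shows "(\<integral>\<^sup>+h'. potential \<delta>1 M (Xs (run h') i0 0) \<partial>hist_ext \<mu> pol h d) \<le> potential \<delta>1 M (Xs (run h) i0 0)"
proof -
  let ?vu = "Vfin rew \<gamma> (env u) (opt p) h d" and ?vl = "Vfin rew \<gamma> (env l) (opt p) h d"
  let ?L = "Xs (run h) i0 0" and ?Q = "hist_ext \<mu> (opt p) h d" and ?R = "phase_return h"
  have "Ms (run h) \<subseteq> {..<N}" using wf_run[of h] unfolding wf_state_def by blast
  note ul = decide_Some(3)[OF dc this]
  have Q: "hist_ext \<mu> pol h d = ?Q"
    by (rule hist_ext_cong) (rule policy_during_phase[OF ph dc])
  have run_end: "run h' = finalize (run h) u l 0 ?vu ?vl (?R h')" if h': "h' \<in> set_pmf ?Q" for h'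
  proof -
    obtain xs where "h' = h @ xs" "length xs = d" using hist_ext_support[OF h'] by blast
    then show ?thesis using run_during_phase[OF ph dc, of xs] merl_d_ge_1 by (simp add: phase_return_append)
  qed
  define v where "v = Vfin rew \<gamma> \<mu> (opt p) h d"
  have ER: "measure_pmf.expectation ?Q ?R = v"
    unfolding v_def Vfin_def phase_return_def ..
  have bd: "\<forall>x\<in>set_pmf ?Q. 0 \<le> (1 - \<gamma>) * ?R x \<and> (1 - \<gamma>) * ?R x \<le> 1"
    using phase_return_bounds by blast
  note increment = potential_return_increment[OF bd integrable_measure_pmf_finite[OF finite_set_pmf_hist_ext] ER]
  let ?pot = "\<lambda>h'. potential \<delta>1 M (Xs (run h') i0 0)"
  consider "i0 = u" | "i0 = l" | "i0 \<noteq> u" "i0 \<noteq> l" by blast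
  then have "(\<integral>\<^sup>+h'. ?pot h' \<partial>?Q) \<le> potential \<delta>1 M ?L"
  proof cases
    case 1
    then have "(\<integral>\<^sup>+h'. ?pot h' \<partial>?Q) = (\<integral>\<^sup>+h'. potential \<delta>1 M (?L @ [(1 - \<gamma>) * (v - ?R h')]) \<partial>?Q)"
      using ul by (intro nn_integral_cong_AE) (auto simp: AE_measure_pmf_iff run_end finalize_Xs v_def)
    also have "\<dots> \<le> potential \<delta>1 M ?L" by (rule increment(1))
    finally show ?thesis .
  next
    case 2
    then have "(\<integral>\<^sup>+h'. ?pot h' \<partial>?Q) = (\<integral>\<^sup>+h'. potential \<delta>1 M (?L @ [(1 - \<gamma>) * (?R h' - v)]) \<partial>?Q)"
      using ul by (intro nn_integral_cong_AE) (auto simp: AE_measure_pmf_iff run_end finalize_Xs v_def)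
    also have "\<dots> \<le> potential \<delta>1 M ?L" by (rule increment(2))
    finally show ?thesis .
  next
    case 3
    then have "(\<integral>\<^sup>+h'. ?pot h' \<partial>?Q) = (\<integral>\<^sup>+h'. potential \<delta>1 M ?L \<partial>?Q)"
      using ul by (intro nn_integral_cong_AE) (auto simp: AE_measure_pmf_iff run_end finalize_Xs)
    then show ?thesis by (simp add: measure_pmf.emeasure_space_1)
  qed
  then show ?thesis unfolding Q .
qed

definition steps_left :: "('a, 'o, 'r) hist \<Rightarrow> nat" where
  "steps_left h = (case phase (run h) of None \<Rightarrow> 0
     | Some ph \<Rightarrow> (case ph of Phase u l p \<kappa> vu vl k R \<Rightarrow> d - k))"

text \<open>The potential of \<mu>'s statistics at the end of the current phase, in expectation.
  Looking ahead to the phase end makes this a supermartingale at every single step.\<close>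
definition expected_potential :: "nat \<Rightarrow> ('a, 'o, 'r) hist \<Rightarrow> ennreal" where
  "expected_potential M h =
     (\<integral>\<^sup>+h'. potential \<delta>1 M (Xs (run h') i0 0) \<partial>hist_ext \<mu> pol h (steps_left h))"

lemma hist_ext_1_support: "c \<in> set_pmf (hist_ext \<nu> \<pi> h 1) \<Longrightarrow> \<exists>x. c = h @ [x]"
  using hist_ext_support[of c \<nu> \<pi> h 1] by (auto simp: length_Suc_conv)

text \<open>Inside a phase, one step just moves the horizon of the look-ahead by one.\<close>
lemma expected_potential_step_in_phase:
  assumes ph: "phase (run h) = Some (Phase u l p \<kappa> vu vl k R)"
  shows "(\<integral>\<^sup>+c. expected_potential M c \<partial>hist_ext \<mu> pol h 1) = expected_potential M h"
proof -
  have k: "k < d" using wf_run[of h] ph unfolding wf_state_def by blast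
  have left_h: "steps_left h = Suc (d - Suc k)" using ph k by (simp add: steps_left_def)
  have left_c: "steps_left c = d - Suc k" if c1: "c \<in> set_pmf (hist_ext \<mu> pol h 1)" for c
  proof -
    obtain x where c: "c = h @ [x]" using hist_ext_1_support[OF c1] by blast
    have "run c = advance (run h) (Phase u l p \<kappa> vu vl k R) (snd (snd x))"
      using ph by (simp add: c run_snoc merl_step_def)
    then show ?thesis by (auto simp: steps_left_def advance_Phase finalize_phase)
  qed
  have "expected_potential M h = (\<integral>\<^sup>+c. (\<integral>\<^sup>+h'. potential \<delta>1 M (Xs (run h') i0 0)
      \<partial>hist_ext \<mu> pol c (d - Suc k)) \<partial>hist_ext \<mu> pol h 1)"
    unfolding expected_potential_def left_h hist_ext_Suc_first[of _ _ _ "d - Suc k"] by simp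
  also have "\<dots> = (\<integral>\<^sup>+c. expected_potential M c \<partial>hist_ext \<mu> pol h 1)"
    by (intro nn_integral_cong_AE) (auto simp: AE_measure_pmf_iff expected_potential_def left_c)
  finally show ?thesis by simp
qed

text \<open>Outside a phase, if no phase starts, the state (hence the potential) is unchanged.\<close>
lemma expected_potential_step_idle:
  assumes ph: "phase (run h) = None" and dc: "decide (Ms (run h)) h = None"
  shows "(\<integral>\<^sup>+c. expected_potential M c \<partial>hist_ext \<mu> pol h 1) = expected_potential M h"
proof -
  have "expected_potential M c = expected_potential M h" if c1: "c \<in> set_pmf (hist_ext \<mu> pol h 1)" for c
  proof -
    obtain x where c: "c = h @ [x]" using hist_ext_1_support[OF c1] by blast
    have "run c = run h" using ph dc by (simp add: c run_snoc merl_step_def)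
    then show ?thesis using ph by (simp add: expected_potential_def steps_left_def)
  qed
  then have "(\<integral>\<^sup>+c. expected_potential M c \<partial>hist_ext \<mu> pol h 1)
      = (\<integral>\<^sup>+c. expected_potential M h \<partial>hist_ext \<mu> pol h 1)"
    by (intro nn_integral_cong_AE) (auto simp: AE_measure_pmf_iff)
  then show ?thesis by (simp add: measure_pmf.emeasure_space_1)
qed

text \<open>When a phase starts, the look-ahead after one step covers the rest of the phase,
  so the claim reduces to phase_potential_step.\<close>
lemma expected_potential_step_start:
  assumes ph: "phase (run h) = None" and dc: "decide (Ms (run h)) h = Some (u, l, p)"
  shows "(\<integral>\<^sup>+c. expected_potential M c \<partial>hist_ext \<mu> pol h 1) \<le> expected_potential M h"
proof -
  have left_c: "steps_left c = d - 1" if c1: "c \<in> set_pmf (hist_ext \<mu> pol h 1)" for c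
  proof -
    obtain x where c: "c = h @ [x]" using hist_ext_1_support[OF c1] by blast
    show ?thesis using run_during_phase[OF ph dc, of "[x]"] merl_d_ge_1
      by (auto simp: c steps_left_def finalize_phase)
  qed
  have "(\<integral>\<^sup>+c. expected_potential M c \<partial>hist_ext \<mu> pol h 1) =
      (\<integral>\<^sup>+c. (\<integral>\<^sup>+h'. potential \<delta>1 M (Xs (run h') i0 0) \<partial>hist_ext \<mu> pol c (d - 1)) \<partial>hist_ext \<mu> pol h 1)"
    by (intro nn_integral_cong_AE) (auto simp: AE_measure_pmf_iff expected_potential_def left_c)
  also have "\<dots> = (\<integral>\<^sup>+h'. potential \<delta>1 M (Xs (run h') i0 0) \<partial>hist_ext \<mu> pol h d)"
    using merl_d_ge_1 hist_ext_Suc_first[of \<mu> pol h "d - 1"] by simp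
  also have "\<dots> \<le> potential \<delta>1 M (Xs (run h) i0 0)"
    by (rule phase_potential_step[OF ph dc])
  also have "\<dots> = expected_potential M h" using ph by (simp add: expected_potential_def steps_left_def)
  finally show ?thesis .
qed

lemma expected_potential_supermartingale:
  "(\<integral>\<^sup>+c. expected_potential M c \<partial>hist_ext \<mu> pol h 1) \<le> expected_potential M h"
proof (cases "phase (run h)")
  case (Some ph)
  then obtain u l p \<kappa> vu vl k R where "phase (run h) = Some (Phase u l p \<kappa> vu vl k R)"
    by (cases ph) auto
  from expected_potential_step_in_phase[OF this] show ?thesis by (rule eq_refl)
next
  case None
  show ?thesis
  proof (cases "decide (Ms (run h)) h")
    case None2: None
    from expected_potential_step_idle[OF None None2] show ?thesis by (rule eq_refl)
  next
    case (Some y)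
    then obtain u l p where "decide (Ms (run h)) h = Some (u, l, p)" by (cases y) auto
    from expected_potential_step_start[OF None this] show ?thesis .
  qed
qed

lemma expected_potential_after:
  "(\<integral>\<^sup>+h. expected_potential M h \<partial>hist_ext \<mu> pol [] T) \<le> expected_potential M []"
proof (induction T)
  case (Suc T)
  have "(\<integral>\<^sup>+h. expected_potential M h \<partial>hist_ext \<mu> pol [] (Suc T)) =
      (\<integral>\<^sup>+h. (\<integral>\<^sup>+c. expected_potential M c \<partial>hist_ext \<mu> pol h 1) \<partial>hist_ext \<mu> pol [] T)"
    using hist_ext_add[of \<mu> pol "[]" T 1] by simp
  also have "\<dots> \<le> (\<integral>\<^sup>+h. expected_potential M h \<partial>hist_ext \<mu> pol [] T)"
    by (intro nn_integral_mono expected_potential_supermartingale)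
  finally show ?case using Suc by simp
qed simp

lemma expected_potential_Nil: "expected_potential M [] \<le> ennreal (\<delta> / 4)"
  using potential_Nil_le by (simp add: expected_potential_def steps_left_def run_Nil merl_init_def)

text \<open>Once \<mu> has been removed, its statistics crossed the threshold, so with M large
  enough to cover the relevant list lengths the expected potential is at least 1.\<close>
lemma expected_potential_removed:
  assumes len: "length h \<le> T" and removed: "i0 \<notin> Ms (run h)"
  shows "1 \<le> expected_potential (T + d) h"
proof -
  have "1 \<le> potential \<delta>1 (T + d) (Xs (run h') i0 0)"
    if h': "h' \<in> set_pmf (hist_ext \<mu> pol h (steps_left h))" for h'
  proof -
    obtain xs where xs: "h' = h @ xs" "length xs = steps_left h" using hist_ext_support[OF h'] by blast
    have "steps_left h \<le> d" by (auto simp: steps_left_def split: option.splits phase.splits)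
    then have "length h' \<le> T + d" using xs len by simp
    moreover have "i0 \<notin> Ms (run h')" using removed run_Ms_antimono xs by blast
    ultimately have rc: "removal_cond \<gamma> \<epsilon> \<delta> N (Xs (run h') i0 0)"
      and "length (Xs (run h') i0 0) \<le> T + d"
      using wf_run[of h'] i0_lt_N unfolding wf_state_def by (blast intro: le_trans)+
    moreover have "threshold \<delta>1 (length (Xs (run h') i0 0)) \<le> sum_list (Xs (run h') i0 0)"
      using rc unfolding removal_cond_def threshold_def by simp
    ultimately show ?thesis
      using potential_threshold_crossed[OF delta1_bounds(1) delta1_lt_1] removal_cond_length[OF rc]
      by blast
  qed
  then have "(\<integral>\<^sup>+h'. 1 \<partial>hist_ext \<mu> pol h (steps_left h)) \<le> expected_potential (T + d) h"
    unfolding expected_potential_def by (intro nn_integral_mono_AE) (auto simp: AE_measure_pmf_iff)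
  then show ?thesis by (simp add: measure_pmf.emeasure_space_1)
qed

text \<open>Markov's inequality applied to the supermartingale: after T steps in \<mu>, the true
  model has been removed with probability at most \<delta>/4.\<close>
lemma removal_prob_le:
  "emeasure (hist_ext \<mu> pol [] T) {h. i0 \<notin> Ms (run h)} \<le> ennreal (\<delta> / 4)"
proof -
  have "emeasure (hist_ext \<mu> pol [] T) {h. i0 \<notin> Ms (run h)} =
      (\<integral>\<^sup>+h. indicator {h. i0 \<notin> Ms (run h)} h \<partial>hist_ext \<mu> pol [] T)"
    by simp
  also have "\<dots> \<le> (\<integral>\<^sup>+h. expected_potential (T + d) h \<partial>hist_ext \<mu> pol [] T)"
  proof (intro nn_integral_mono_AE, unfold AE_measure_pmf_iff, intro ballI)
    fix h assume "h \<in> set_pmf (hist_ext \<mu> pol [] T)"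
    then have "length h = T" using hist_ext_support by fastforce
    then show "indicator {h. i0 \<notin> Ms (run h)} h \<le> expected_potential (T + d) h"
      using expected_potential_removed[of h T] by (auto simp: indicator_def)
  qed
  also have "\<dots> \<le> expected_potential (T + d) []" by (rule expected_potential_after)
  also have "\<dots> \<le> ennreal (\<delta> / 4)" by (rule expected_potential_Nil)
  finally show ?thesis .
qed

lemma survival_prob_ge: "1 - \<delta> / 4 \<le> measure_pmf.prob (hist_ext \<mu> pol [] T) {h. i0 \<in> Ms (run h)}"
proof -
  have "measure_pmf.prob (hist_ext \<mu> pol [] T) {h. i0 \<notin> Ms (run h)} \<le> \<delta> / 4"
    using removal_prob_le[of T] \<delta>_pos by (simp add: measure_pmf.emeasure_eq_measure ennreal_le_iff)
  moreover have "measure_pmf.prob (hist_ext \<mu> pol [] T) {h. i0 \<in> Ms (run h)}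
      = 1 - measure_pmf.prob (hist_ext \<mu> pol [] T) {h. i0 \<notin> Ms (run h)}"
    using measure_pmf.prob_compl[of "{h. i0 \<notin> Ms (run h)}" "hist_ext \<mu> pol [] T"]
    by (simp add: set_diff_eq)
  ultimately show ?thesis by simp
qed

end

theorem lemma2:
  fixes rew :: "'r::finite \<Rightarrow> real"
    and env :: "nat \<Rightarrow> ('a::finite, 'o::finite, 'r) env"
    and opt :: "nat \<Rightarrow> ('a, 'o, 'r) policy"
    and tb :: "('a, 'o, 'r) hist \<Rightarrow> nat set \<Rightarrow> nat \<times> nat \<times> nat"
    and \<gamma> \<epsilon> \<delta> :: real
    and N i0 :: nat
    and P :: "('a \<times> 'o \<times> 'r) stream measure"
  assumes rew: "inj rew" "\<forall>x. 0 \<le> rew x \<and> rew x \<le> 1"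
    and \<gamma>: "0 < \<gamma>" "\<gamma> < 1"
    and \<epsilon>: "0 < \<epsilon>" "\<epsilon> \<le> 1"
    and \<delta>: "0 < \<delta>" "\<delta> < 1"
    and M: "inj_on env {..<N}"
    and opt: "\<forall>i<N. optimal_policy rew \<gamma> (env i) (opt i)"
    and tb: "valid_tiebreak rew \<gamma> \<epsilon> N env opt tb"
    and mu: "i0 < N"
    and P: "is_interaction_measure (env i0) (merl_policy rew \<gamma> \<epsilon> \<delta> N env opt tb) P"
  shows "measure P {\<omega> \<in> space P. \<forall>t. i0 \<in> Ms (merl_run rew \<gamma> \<epsilon> \<delta> N env opt tb (stake t \<omega>))}
           \<ge> 1 - \<delta> / 4"
proof -
  interpret merl_setting rew env opt tb \<gamma> \<epsilon> \<delta> N i0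
    using rew \<gamma> \<epsilon> \<delta> tb mu by unfold_locales auto
  interpret prob_space P using P unfolding is_interaction_measure_def by blast
  show ?thesis
  proof (rule prob_always_ge)
    fix t
    show "{\<omega> \<in> space P. i0 \<in> Ms (run (stake t \<omega>))} \<in> events"
      using stake_event_sets[OF P, of t "{h. i0 \<in> Ms (run h)}"] by simp
    show "1 - \<delta> / 4 \<le> prob {\<omega> \<in> space P. i0 \<in> Ms (run (stake t \<omega>))}"
      using interaction_measure_stake[OF P, of t "{h. i0 \<in> Ms (run h)}"] survival_prob_ge[of t] by simp
  next
    fix t \<omega>
    have "Ms (run (stake (Suc t) \<omega>)) \<subseteq> Ms (run (stake t \<omega>))"
      unfolding stake_Suc by (rule run_Ms_antimono)
    then show "i0 \<in> Ms (run (stake (Suc t) \<omega>)) \<Longrightarrow> i0 \<in> Ms (run (stake t \<omega>))" by blast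
  qed
qed

end
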